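(* Let $H$ be a bigraph. Then $H$ is a cocomparability bigraph if and only if $H^{++}$ is a strong cocomparability graph.
   Context: A bigraph is a bipartite graph with fixed colour classes $X,Y$. The Slash matrix is the $2\times2$ matrix with rows $(0,1)$ and $(1,0)$; a matrix contains it as a submatrix if there are rows $i<j$ and columns $k<l$ with entries $(i,k)=0$, $(i,l)=1$, $(j,k)=1$, $(j,l)=0$. A bigraph is a cocomparability bigraph if its biadjacency matrix (rows indexed by $X$, columns by $Y$) admits independent permutations of rows and of columns yielding a matrix not containing the Slash matrix as a submatrix. A reflexive graph (every vertex carries a loop) is a strong cocomparability graph if its adjacency matrix (1's on the diagonal) admits a simultaneous row-and-column permutation not containing the Slash matrix as a submatrix. For a bigraph $H$, $H^{++}$ is the reflexive graph obtained from $H$ by making each of the two colour classes a clique and adding a loop at every vertex. *)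

theory Defs
  imports Main
begin

text \<open>A bigraph H with colour classes X and Y is modelled as (X, Y, E) with
  X :: 'a set, Y :: 'b set finite and edge set E \<subseteq> X \<times> Y.
  The biadjacency matrix has rows indexed by X and columns by Y, entry 1 at (x,y) iff (x,y) \<in> E.
  A permutation of the rows is an enumeration r : X \<rightarrow> {0..<card X} (bijection);
  row x is placed at position r x.\<close>

definition slash_free_bi ::
  "'a set \<Rightarrow> 'b set \<Rightarrow> ('a \<times> 'b) set \<Rightarrow> ('a \<Rightarrow> nat) \<Rightarrow> ('b \<Rightarrow> nat) \<Rightarrow> bool" where
  "slash_free_bi X Y E r c \<longleftrightarrow>
     \<not> (\<exists>i\<in>X. \<exists>j\<in>X. \<exists>k\<in>Y. \<exists>l\<in>Y. r i < r j \<and> c k < c l \<and>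
          (i, k) \<notin> E \<and> (i, l) \<in> E \<and> (j, k) \<in> E \<and> (j, l) \<notin> E)"

definition cocomparability_bigraph :: "'a set \<Rightarrow> 'b set \<Rightarrow> ('a \<times> 'b) set \<Rightarrow> bool" where
  "cocomparability_bigraph X Y E \<longleftrightarrow>
     (\<exists>r c. bij_betw r X {0..<card X} \<and> bij_betw c Y {0..<card Y} \<and> slash_free_bi X Y E r c)"

text \<open>A reflexive graph on vertex set V with adjacency relation A (symmetric, A v v for all v).
  Its adjacency matrix has 1's on the diagonal; a simultaneous permutation is an enumeration
  p : V \<rightarrow> {0..<card V}.\<close>

definition slash_free_sym :: "'v set \<Rightarrow> ('v \<Rightarrow> 'v \<Rightarrow> bool) \<Rightarrow> ('v \<Rightarrow> nat) \<Rightarrow> bool" where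
  "slash_free_sym V A p \<longleftrightarrow>
     \<not> (\<exists>i\<in>V. \<exists>j\<in>V. \<exists>k\<in>V. \<exists>l\<in>V. p i < p j \<and> p k < p l \<and>
          \<not> A i k \<and> A i l \<and> A j k \<and> \<not> A j l)"

definition strong_cocomparability_graph :: "'v set \<Rightarrow> ('v \<Rightarrow> 'v \<Rightarrow> bool) \<Rightarrow> bool" where
  "strong_cocomparability_graph V A \<longleftrightarrow>
     (\<exists>p. bij_betw p V {0..<card V} \<and> slash_free_sym V A p)"

text \<open>H^{++}: vertex set X \<uplus> Y (as a sum type), both classes made cliques, loops everywhere.\<close>

definition plusplus_vertices :: "'a set \<Rightarrow> 'b set \<Rightarrow> ('a + 'b) set" where
  "plusplus_vertices X Y = Inl ` X \<union> Inr ` Y"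

fun plusplus_adj :: "('a \<times> 'b) set \<Rightarrow> ('a + 'b) \<Rightarrow> ('a + 'b) \<Rightarrow> bool" where
  "plusplus_adj E (Inl x) (Inl x') = True"
| "plusplus_adj E (Inr y) (Inr y') = True"
| "plusplus_adj E (Inl x) (Inr y) = ((x, y) \<in> E)"
| "plusplus_adj E (Inr y) (Inl x) = ((x, y) \<in> E)"

end

theory Submission
  imports Defs
begin

text \<open>Both Slash conditions only compare positions, so any injective ranking may stand in for
  an enumeration. The only non-edges of \<open>H\<^sup>+\<^sup>+\<close> join X to Y, so in a Slash with rows i, j
  and columns k, l of its adjacency matrix, i and k lie in different classes, and so do j and l.
  Listing X before Y forces i, j into one class and k, l into the other, and the four vertices
  form a Slash of the biadjacency matrix or of its transpose, which is the same pattern.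
  Conversely, a Slash of the biadjacency matrix is one of \<open>H\<^sup>+\<^sup>+\<close> in any order extending
  the given orders of X and Y.\<close>

lemma exists_enumeration_preserving_order:
  fixes f :: "'x \<Rightarrow> nat"
  assumes fin: "finite S" and inj: "inj_on f S"
  shows "\<exists>g. bij_betw g S {0..<card S} \<and> (\<forall>x\<in>S. \<forall>y\<in>S. g x < g y \<longleftrightarrow> f x < f y)"
proof -
  define g where "g x = card {z\<in>S. f z < f x}" for x
  have mono: "g x < g y" if "x \<in> S" "y \<in> S" "f x < f y" for x y
  proof -
    have "{z\<in>S. f z < f x} \<subset> {z\<in>S. f z < f y}" using that by auto
    then show ?thesis unfolding g_def using fin by (intro psubset_card_mono) auto
  qed
  have less_iff: "g x < g y \<longleftrightarrow> f x < f y" if "x \<in> S" "y \<in> S" for x y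
  proof -
    have "f x \<noteq> f y" if "x \<noteq> y" using inj that \<open>x \<in> S\<close> \<open>y \<in> S\<close> by (meson inj_onD)
    then show ?thesis
      using mono[of x y] mono[of y x] that by (cases "x = y") (auto simp: neq_iff)
  qed
  have "inj_on g S"
  proof (rule inj_onI)
    fix x y assume "x \<in> S" "y \<in> S" "g x = g y"
    then have "f x = f y" using less_iff[of x y] less_iff[of y x] by (simp add: neq_iff)
    then show "x = y" using inj \<open>x \<in> S\<close> \<open>y \<in> S\<close> by (simp add: inj_on_eq_iff)
  qed
  moreover have "g ` S \<subseteq> {0..<card S}"
  proof
    fix v assume "v \<in> g ` S"
    then obtain x where x: "x \<in> S" "v = g x" by auto
    then have "{z\<in>S. f z < f x} \<subset> S" by auto
    then have "g x < card S" unfolding g_def by (rule psubset_card_mono[OF fin])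
    then show "v \<in> {0..<card S}" using x by simp
  qed
  ultimately have "bij_betw g S {0..<card S}"
    using card_subset_eq[of "{0..<card S}" "g ` S"] by (simp add: bij_betw_def card_image)
  with less_iff show ?thesis by blast
qed

lemma slash_free_bi_order_cong:
  assumes "\<forall>x\<in>X. \<forall>x'\<in>X. r x < r x' \<longleftrightarrow> r' x < r' x'"
    and "\<forall>y\<in>Y. \<forall>y'\<in>Y. c y < c y' \<longleftrightarrow> c' y < c' y'"
  shows "slash_free_bi X Y E r c \<longleftrightarrow> slash_free_bi X Y E r' c'"
  using assms unfolding slash_free_bi_def by blast

lemma slash_free_sym_order_cong:
  assumes "\<forall>v\<in>V. \<forall>w\<in>V. p v < p w \<longleftrightarrow> p' v < p' w"
  shows "slash_free_sym V A p \<longleftrightarrow> slash_free_sym V A p'"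
  using assms unfolding slash_free_sym_def by blast

lemma cocomparability_bigraph_iff_inj_on:
  assumes "finite X" and "finite Y"
  shows "cocomparability_bigraph X Y E \<longleftrightarrow>
         (\<exists>r c. inj_on r X \<and> inj_on c Y \<and> slash_free_bi X Y E r c)"
proof
  assume "\<exists>r c. inj_on r X \<and> inj_on c Y \<and> slash_free_bi X Y E r c"
  then obtain r c where "inj_on r X" "inj_on c Y" and sf: "slash_free_bi X Y E r c" by blast
  obtain r' where "bij_betw r' X {0..<card X}"
    and r': "\<forall>x\<in>X. \<forall>x'\<in>X. r' x < r' x' \<longleftrightarrow> r x < r x'"
    using exists_enumeration_preserving_order[OF assms(1) \<open>inj_on r X\<close>] by blast
  moreover obtain c' where "bij_betw c' Y {0..<card Y}"
    and c': "\<forall>y\<in>Y. \<forall>y'\<in>Y. c' y < c' y' \<longleftrightarrow> c y < c y'"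
    using exists_enumeration_preserving_order[OF assms(2) \<open>inj_on c Y\<close>] by blast
  moreover have "slash_free_bi X Y E r' c'"
    using sf slash_free_bi_order_cong[OF r' c'] by blast
  ultimately show "cocomparability_bigraph X Y E"
    unfolding cocomparability_bigraph_def by blast
qed (auto simp: cocomparability_bigraph_def bij_betw_def)

lemma strong_cocomparability_graph_iff_inj_on:
  assumes "finite V"
  shows "strong_cocomparability_graph V A \<longleftrightarrow> (\<exists>p. inj_on p V \<and> slash_free_sym V A p)"
proof
  assume "\<exists>p. inj_on p V \<and> slash_free_sym V A p"
  then obtain p where "inj_on p V" and sf: "slash_free_sym V A p" by blast
  obtain p' where "bij_betw p' V {0..<card V}"
    and p': "\<forall>v\<in>V. \<forall>w\<in>V. p' v < p' w \<longleftrightarrow> p v < p w"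
    using exists_enumeration_preserving_order[OF assms \<open>inj_on p V\<close>] by blast
  moreover have "slash_free_sym V A p'"
    using sf slash_free_sym_order_cong[OF p'] by blast
  ultimately show "strong_cocomparability_graph V A"
    unfolding strong_cocomparability_graph_def by blast
qed (auto simp: strong_cocomparability_graph_def bij_betw_def)

lemma inj_on_case_sum_shifted:
  fixes r :: "'a \<Rightarrow> nat" and c :: "'b \<Rightarrow> nat"
  assumes "inj_on r X" and "inj_on c Y" and "\<forall>x\<in>X. r x < n"
  shows "inj_on (case_sum r (\<lambda>y. n + c y)) (plusplus_vertices X Y)"
  using assms unfolding plusplus_vertices_def inj_on_def by fastforce

lemma slash_free_plusplus_if_slash_free_bi:
  fixes r :: "'a \<Rightarrow> nat" and c :: "'b \<Rightarrow> nat"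
  assumes sf: "slash_free_bi X Y E r c" and bound: "\<forall>x\<in>X. r x < n"
  shows "slash_free_sym (plusplus_vertices X Y) (plusplus_adj E) (case_sum r (\<lambda>y. n + c y))"
  unfolding slash_free_sym_def
proof clarify
  fix i j k l
  assume V: "i \<in> plusplus_vertices X Y" "j \<in> plusplus_vertices X Y"
    "k \<in> plusplus_vertices X Y" "l \<in> plusplus_vertices X Y"
    and ij: "case_sum r (\<lambda>y. n + c y) i < case_sum r (\<lambda>y. n + c y) j"
    and kl: "case_sum r (\<lambda>y. n + c y) k < case_sum r (\<lambda>y. n + c y) l"
    and adj: "\<not> plusplus_adj E i k" "plusplus_adj E i l" "plusplus_adj E j k" "\<not> plusplus_adj E j l"
  have slash_bi: False if "a \<in> X" "a' \<in> X" "b \<in> Y" "b' \<in> Y" "r a < r a'" "c b < c b'"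
    "(a, b) \<notin> E" "(a, b') \<in> E" "(a', b) \<in> E" "(a', b') \<notin> E" for a a' b b'
    using sf that unfolding slash_free_bi_def by blast
  show False
  proof (cases i)
    case (Inl a)
    then obtain b where k: "k = Inr b" using adj(1) by (cases k) auto
    show False
    proof (cases j)
      case (Inl a')
      then obtain b' where "l = Inr b'" using adj(4) by (cases l) auto
      then show False
        using slash_bi[of a a' b b'] \<open>i = Inl a\<close> \<open>j = Inl a'\<close> k V ij kl adj
        by (auto simp: plusplus_vertices_def)
    next
      case (Inr b')
      \<comment> \<open>impossible: l would be a vertex of X placed after the vertex k of Y\<close>
      then obtain a' where "l = Inl a'" using adj(4) by (cases l) auto
      then show False using k V kl bound by (auto simp: plusplus_vertices_def)
    qed
  next
    case (Inr b)
    then obtain a where k: "k = Inl a" using adj(1) by (cases k) auto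
    obtain b' where j: "j = Inr b'"
      using Inr V ij bound by (cases j) (auto simp: plusplus_vertices_def)
    then obtain a' where "l = Inl a'" using adj(4) by (cases l) auto
    then show False
      using slash_bi[of a a' b b'] Inr j k V ij kl adj by (auto simp: plusplus_vertices_def)
  qed
qed

lemma slash_free_bi_if_slash_free_plusplus:
  assumes sf: "slash_free_sym (plusplus_vertices X Y) (plusplus_adj E) p"
  shows "slash_free_bi X Y E (p \<circ> Inl) (p \<circ> Inr)"
  unfolding slash_free_bi_def
proof clarify
  fix a a' b b'
  assume "a \<in> X" "a' \<in> X" "b \<in> Y" "b' \<in> Y" "(p \<circ> Inl) a < (p \<circ> Inl) a'"
    "(p \<circ> Inr) b < (p \<circ> Inr) b'" "(a, b) \<notin> E" "(a, b') \<in> E" "(a', b) \<in> E" "(a', b') \<notin> E"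
  moreover have "Inl a \<in> plusplus_vertices X Y" "Inl a' \<in> plusplus_vertices X Y"
    "Inr b \<in> plusplus_vertices X Y" "Inr b' \<in> plusplus_vertices X Y"
    using calculation by (auto simp: plusplus_vertices_def)
  ultimately show False
    using sf unfolding slash_free_sym_def
    by (elim notE, intro bexI[where x = "Inl a"] bexI[where x = "Inl a'"]
        bexI[where x = "Inr b"] bexI[where x = "Inr b'"] conjI) simp_all
qed

theorem theorem12:
  fixes X :: "'a set" and Y :: "'b set" and E :: "('a \<times> 'b) set"
  assumes "finite X" and "finite Y" and "E \<subseteq> X \<times> Y"
  shows "cocomparability_bigraph X Y E \<longleftrightarrow>
         strong_cocomparability_graph (plusplus_vertices X Y) (plusplus_adj E)"
proof -
  have fin: "finite (plusplus_vertices X Y)"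
    using assms by (simp add: plusplus_vertices_def)
  show ?thesis
  proof
    assume "cocomparability_bigraph X Y E"
    then obtain r c where "bij_betw r X {0..<card X}" and "bij_betw c Y {0..<card Y}"
      and sf: "slash_free_bi X Y E r c" unfolding cocomparability_bigraph_def by blast
    then have "inj_on r X" "inj_on c Y" and "\<forall>x\<in>X. r x < card X"
      using bij_betwE by (auto simp: bij_betw_def)
    then show "strong_cocomparability_graph (plusplus_vertices X Y) (plusplus_adj E)"
      using strong_cocomparability_graph_iff_inj_on[OF fin] inj_on_case_sum_shifted
        slash_free_plusplus_if_slash_free_bi[OF sf] by blast
  next
    assume "strong_cocomparability_graph (plusplus_vertices X Y) (plusplus_adj E)"
    then obtain p where "inj_on p (plusplus_vertices X Y)"
      and "slash_free_sym (plusplus_vertices X Y) (plusplus_adj E) p"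
      using strong_cocomparability_graph_iff_inj_on[OF fin] by blast
    then have "inj_on (p \<circ> Inl) X" "inj_on (p \<circ> Inr) Y"
      and "slash_free_bi X Y E (p \<circ> Inl) (p \<circ> Inr)"
      using slash_free_bi_if_slash_free_plusplus
      by (auto simp: plusplus_vertices_def inj_on_def)
    then show "cocomparability_bigraph X Y E"
      using cocomparability_bigraph_iff_inj_on[OF assms(1,2)] by blast
  qed
qed

end
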